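(* Let $G$ be a looped simple graph, $S$ a subtransversal of $W(G)$, and $\nu\ge 0$ an integer. Then $\nu$ equals the nullity $|S|-r(S)$ of $S$ in $M[IAS(G)]$ if and only if there exist a looped simple graph $H$ locally equivalent to $G$, a stable set $X\subseteq V(H)$ with $|X|=\nu$, and an induced isomorphism $\beta:M[IAS(G)]\to M[IAS(H)]$ such that $$\bigcup_{x\in X}\zeta_H(x)\subseteq\beta(S)\subseteq\{\phi_H(v):v\in V(H)\setminus X\}\cup\bigcup_{x\in X}\zeta_H(x).$$
   Context: A looped simple graph is a finite graph in which each vertex carries at most one loop and no two distinct vertices are joined by more than one edge. "Adjacent"/"neighbors" refer only to distinct vertices joined by a non-loop edge; $N_G(v)$ is the set of neighbors of $v$; a stable set is a set of vertices no two of which are adjacent. $A(G)$ is the $V(G)\times V(G)$ matrix over $GF(2)$ with diagonal entry $1$ exactly at looped vertices and off-diagonal entry $1$ exactly for adjacent pairs. $IAS(G)=(I\mid A(G)\mid A(G)+I)$ over $GF(2)$, rows indexed by $V(G)$; the $v$-columns of the three blocks are labelled $\phi_G(v),\chi_G(v),\psi_G(v)$. $M[IAS(G)]$ is the binary column matroid of $IAS(G)$ on $W(G)=\{\phi_G(v),\chi_G(v),\psi_G(v):v\in V(G)\}$, with rank function $r$. The vertex triple of $v$ is $\tau_G(v)=\{\phi_G(v),\chi_G(v),\psi_G(v)\}$; a subtransversal meets each vertex triple in at most one element. Neighborhood circuit: $\zeta_G(v)=\{\chi_G(v)\}\cup\{\phi_G(w):w\in N_G(v)\}$ if $v$ is unlooped,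 and $\{\psi_G(v)\}\cup\{\phi_G(w):w\in N_G(v)\}$ if $v$ is looped. Local equivalence: $G_\ell^v$ complements the loop status of $v$; $G_s^v$ complements the adjacency status of every pair of distinct neighbors of $v$; $G_{ns}^v$ does this and also complements the loop status of every neighbor of $v$. $H$ is locally equivalent to $G$ if obtained from $G$ by a finite sequence of such operations. Induced isomorphisms: for each such operation producing $G'$ from $G$ there is a matroid isomorphism $M[IAS(G)]\to M[IAS(G')]$ sending $\alpha_G(x)\mapsto\alpha_{G'}(x)$ for all $\alpha\in\{\phi,\chi,\psi\}$, $x\in V(G)$, except: for $G'=G_\ell^v$, $\chi_G(v)\mapsto\psi_{G'}(v)$, $\psi_G(v)\mapsto\chi_{G'}(v)$; for $G'=G_{ns}^v$ with $v$ unlooped, $\phi_G(v)\mapsto\psi_{G'}(v)$, $\psi_G(v)\mapsto\phi_{G'}(v)$, and with $v$ looped, $\phi_G(v)\mapsto\chi_{G'}(v)$, $\chi_G(v)\mapsto\phi_{G'}(v)$; for $G'=G_s^v$, the same exchange at $v$ as for $G_{ns}^v$ and in addition, for every $w\in N_G(v)$, $\chi_G(w)\mapsto\psi_{G'}(w)$, $\psi_G(w)\mapsto\chi_{G'}(w)$. An induced isomorphism $M[IAS(G)]\to M[IAS(H)]$ is a composition of such isomorphisms along a sequence of operations transforming $G$ into $H$. *)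

theory Defs
  imports Main
begin

record 'v lgraph =
  verts :: "'v set"
  loops :: "'v set"
  adj   :: "'v \<Rightarrow> 'v \<Rightarrow> bool"

definition lsg :: "('v, 'b) lgraph_scheme \<Rightarrow> bool" where
  "lsg G \<longleftrightarrow> finite (verts G) \<and> loops G \<subseteq> verts G
     \<and> (\<forall>u w. adj G u w \<longrightarrow> adj G w u)
     \<and> (\<forall>u. \<not> adj G u u)
     \<and> (\<forall>u w. adj G u w \<longrightarrow> u \<in> verts G \<and> w \<in> verts G)"

definition nbhd :: "'v lgraph \<Rightarrow> 'v \<Rightarrow> 'v set" where
  "nbhd G v = {w. adj G v w}"

definition stable :: "'v lgraph \<Rightarrow> 'v set \<Rightarrow> bool" where
  "stable G X \<longleftrightarrow> (\<forall>x\<in>X. \<forall>y\<in>X. \<not> adj G x y)"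

datatype tag = Phi | Chi | Psi

type_synonym 'v welem = "tag \<times> 'v"

definition W :: "'v lgraph \<Rightarrow> 'v welem set" where
  "W G = UNIV \<times> verts G"

definition vtriple :: "'v \<Rightarrow> 'v welem set" where
  "vtriple v = {(Phi, v), (Chi, v), (Psi, v)}"

definition subtransversal :: "'v lgraph \<Rightarrow> 'v welem set \<Rightarrow> bool" where
  "subtransversal G S \<longleftrightarrow> S \<subseteq> W G \<and> (\<forall>v\<in>verts G. card (S \<inter> vtriple v) \<le> 1)"

text \<open>Entry (w,x) of the adjacency matrix A(G) over GF(2) (as a boolean).\<close>
definition Aent :: "'v lgraph \<Rightarrow> 'v \<Rightarrow> 'v \<Rightarrow> bool" where
  "Aent G w x = ((w = x \<and> x \<in> loops G) \<or> adj G w x)"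

text \<open>Column of IAS(G) labelled by an element of W(G); entry in row w.\<close>
fun col :: "'v lgraph \<Rightarrow> 'v welem \<Rightarrow> 'v \<Rightarrow> bool" where
  "col G (Phi, x) w = (w = x)"
| "col G (Chi, x) w = Aent G w x"
| "col G (Psi, x) w = (Aent G w x \<noteq> (w = x))"

text \<open>Linear independence over GF(2) of a set of columns: no nonempty subset
  sums to the zero vector (rows indexed by V(G)).\<close>
definition indep :: "'v lgraph \<Rightarrow> 'v welem set \<Rightarrow> bool" where
  "indep G T \<longleftrightarrow> finite T \<and>
     (\<forall>U\<subseteq>T. U \<noteq> {} \<longrightarrow> (\<exists>w\<in>verts G. odd (card {e\<in>U. col G e w})))"

definition rk :: "'v lgraph \<Rightarrow> 'v welem set \<Rightarrow> nat" where
  "rk G S = Max {card T | T. T \<subseteq> S \<and> indep G T}"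

definition zeta :: "'v lgraph \<Rightarrow> 'v \<Rightarrow> 'v welem set" where
  "zeta G v = {(if v \<in> loops G then Psi else Chi, v)} \<union> {(Phi, w) | w. w \<in> nbhd G v}"

definition loc_l :: "'v \<Rightarrow> 'v lgraph \<Rightarrow> 'v lgraph" where
  "loc_l v G = G\<lparr>loops := (if v \<in> loops G then loops G - {v} else insert v (loops G))\<rparr>"

definition loc_s :: "'v \<Rightarrow> 'v lgraph \<Rightarrow> 'v lgraph" where
  "loc_s v G = G\<lparr>adj := (\<lambda>a b. if a \<noteq> b \<and> a \<in> nbhd G v \<and> b \<in> nbhd G v
                                then \<not> adj G a b else adj G a b)\<rparr>"

definition loc_ns :: "'v \<Rightarrow> 'v lgraph \<Rightarrow> 'v lgraph" where
  "loc_ns v G = (loc_s v G)\<lparr>loops := (loops G - nbhd G v) \<union> (nbhd G v - loops G)\<rparr>"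

fun swapCP :: "tag \<Rightarrow> tag" where
  "swapCP Chi = Psi" | "swapCP Psi = Chi" | "swapCP Phi = Phi"
fun swapFP :: "tag \<Rightarrow> tag" where
  "swapFP Phi = Psi" | "swapFP Psi = Phi" | "swapFP Chi = Chi"
fun swapFC :: "tag \<Rightarrow> tag" where
  "swapFC Phi = Chi" | "swapFC Chi = Phi" | "swapFC Psi = Psi"

text \<open>Induced isomorphisms of the single operations (as maps on labels, applied
  in the graph G before the operation).\<close>
definition iso_l :: "'v \<Rightarrow> 'v welem \<Rightarrow> 'v welem" where
  "iso_l v e = (if snd e = v then (swapCP (fst e), snd e) else e)"

definition iso_ns :: "'v lgraph \<Rightarrow> 'v \<Rightarrow> 'v welem \<Rightarrow> 'v welem" where
  "iso_ns G v e = (if snd e = v then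
      ((if v \<in> loops G then swapFC else swapFP) (fst e), snd e) else e)"

definition iso_s :: "'v lgraph \<Rightarrow> 'v \<Rightarrow> 'v welem \<Rightarrow> 'v welem" where
  "iso_s G v e = (if snd e = v then
      ((if v \<in> loops G then swapFC else swapFP) (fst e), snd e)
    else if snd e \<in> nbhd G v then (swapCP (fst e), snd e) else e)"

text \<open>ind_iso G H beta: H is obtained from G by a finite sequence of local operations
  and beta is the induced isomorphism M[IAS(G)] -> M[IAS(H)] along that sequence.\<close>
inductive ind_iso :: "'v lgraph \<Rightarrow> 'v lgraph \<Rightarrow> ('v welem \<Rightarrow> 'v welem) \<Rightarrow> bool"
  for G where
  refl: "ind_iso G G id"
| step_l: "ind_iso G H \<beta> \<Longrightarrow> v \<in> verts H \<Longrightarrow> ind_iso G (loc_l v H) (iso_l v \<circ> \<beta>)"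
| step_s: "ind_iso G H \<beta> \<Longrightarrow> v \<in> verts H \<Longrightarrow> ind_iso G (loc_s v H) (iso_s H v \<circ> \<beta>)"
| step_ns: "ind_iso G H \<beta> \<Longrightarrow> v \<in> verts H \<Longrightarrow> ind_iso G (loc_ns v H) (iso_ns H v \<circ> \<beta>)"

definition locally_equivalent :: "'v lgraph \<Rightarrow> 'v lgraph \<Rightarrow> bool" where
  "locally_equivalent G H \<longleftrightarrow> (\<exists>\<beta>. ind_iso G H \<beta>)"

end

theory Submission
  imports Defs
begin

text \<open>Each local operation, read through its induced isomorphism, acts on the columns of
  \<open>IAS\<close> as the elementary row operation adding row \<open>v\<close> to the rows indexed by \<open>N(v)\<close> (trivially
  for loop complementation); so induced isomorphisms preserve independence, hence rank and
  cardinality. If \<open>\<beta>(S)\<close> has the displayed shape, its \<open>\<phi>\<close>-elements are independent and every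
  column of \<open>\<beta>(S)\<close> is supported on their rows, so the rank is the number of \<open>\<phi>\<close>-elements and
  the nullity is \<open>|X|\<close>. Conversely such an \<open>H\<close> is reached by local complementations \<open>s\<close>: at
  the vertex of an element that is neither a \<open>\<phi>\<close> nor the centre of its neighbourhood circuit
  (turning it into a \<open>\<phi>\<close>), or else at a neighbour without \<open>\<phi>\<close> of a circuit centre (creating
  an element of the first kind). Twice the number of vertices without \<open>\<phi>\<close>, plus one if there
  is no element of the first kind, strictly decreases.\<close>

lemma odd_card_xor:
  assumes "finite U"
  shows "odd (card {e\<in>U. P e \<noteq> Q e}) \<longleftrightarrow> odd (card {e\<in>U. P e}) \<noteq> odd (card {e\<in>U. Q e})"
  using assms
proof (induction U rule: finite_induct)
  case (insert x F)
  have split: "{e\<in>insert x F. R e} = (if R x then insert x {e\<in>F. R e} else {e\<in>F. R e})" for R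
    by auto
  have "finite {e\<in>F. R e}" "x \<notin> {e\<in>F. R e}" for R
    using insert.hyps by simp_all
  then show ?case
    using insert.IH unfolding split by (auto simp: card_insert_if)
qed simp

lemma indep_image_row_addition:
  assumes v: "v \<in> verts H" "v \<notin> N" and inj: "inj_on f T" and verts: "verts H' = verts H"
    and col: "\<And>e w. e \<in> T \<Longrightarrow> col H' (f e) w \<longleftrightarrow> col H e w \<noteq> (col H e v \<and> w \<in> N)"
  shows "indep H' (f ` T) \<longleftrightarrow> indep H T"
proof -
  have parity: "odd (card {e\<in>f ` U. col H' e w}) \<longleftrightarrow>
      odd (card {e\<in>U. col H e w}) \<noteq> (odd (card {e\<in>U. col H e v}) \<and> w \<in> N)"
    if U: "U \<subseteq> T" "finite U" for U w
  proof -
    have "card {e\<in>f ` U. col H' e w} = card {e\<in>U. col H' (f e) w}"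
      using inj U(1) by (subst card_image[symmetric]) (auto intro: inj_on_subset intro!: arg_cong[where f = card])
    also have "{e\<in>U. col H' (f e) w} = {e\<in>U. col H e w \<noteq> (col H e v \<and> w \<in> N)}"
      using col U(1) by auto
    finally show ?thesis
      using odd_card_xor[OF U(2), of "\<lambda>e. col H e w" "\<lambda>e. col H e v \<and> w \<in> N"] by (cases "w \<in> N") simp_all
  qed
  have rows: "(\<exists>w\<in>verts H'. odd (card {e\<in>f ` U. col H' e w})) \<longleftrightarrow>
      (\<exists>w\<in>verts H. odd (card {e\<in>U. col H e w}))"
    if "U \<subseteq> T" "finite U" for U
  proof (cases "odd (card {e\<in>U. col H e v})")
    case True
    \<comment> \<open>row \<open>v\<close> is unchanged, so it is an odd row on both sides\<close>
    then have "odd (card {e\<in>f ` U. col H' e v})"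
      using parity[OF that] v(2) by simp
    then show ?thesis
      using True v(1) verts by blast
  next
    case False
    then show ?thesis
      using parity[OF that] verts by simp
  qed
  show ?thesis
  proof (cases "finite T")
    case True
    then have "U \<subseteq> T \<Longrightarrow> (\<exists>w\<in>verts H'. odd (card {e\<in>f ` U. col H' e w})) \<longleftrightarrow>
        (\<exists>w\<in>verts H. odd (card {e\<in>U. col H e w}))" for U
      using rows finite_subset by blast
    with True show ?thesis
      unfolding indep_def all_subset_image by simp
  next
    case False
    then show ?thesis
      using inj finite_image_iff by (auto simp: indep_def)
  qed
qed

lemma lsg_not_adj_self: "lsg H \<Longrightarrow> \<not> adj H u u"
  by (simp add: lsg_def)

lemma lsg_adj_sym: "lsg H \<Longrightarrow> adj H u w \<longleftrightarrow> adj H w u"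
  by (auto simp: lsg_def)

lemma not_in_nbhd_self: "lsg H \<Longrightarrow> v \<notin> nbhd H v"
  by (simp add: nbhd_def lsg_def)

lemma col_loc_l: "lsg H \<Longrightarrow> col (loc_l v H) (iso_l v e) w \<longleftrightarrow> col H e w"
  using lsg_not_adj_self[of H v]
  by (cases e; rename_tac t x; case_tac t) (auto simp: loc_l_def iso_l_def Aent_def)

lemma col_loc_s:
  "lsg H \<Longrightarrow> col (loc_s v H) (iso_s H v e) w \<longleftrightarrow> col H e w \<noteq> (col H e v \<and> w \<in> nbhd H v)"
  using lsg_not_adj_self[of H] lsg_adj_sym[of H]
  by (cases e; rename_tac t x; case_tac t) (auto simp: loc_s_def iso_s_def Aent_def nbhd_def)

lemma col_loc_ns:
  "lsg H \<Longrightarrow> col (loc_ns v H) (iso_ns H v e) w \<longleftrightarrow> col H e w \<noteq> (col H e v \<and> w \<in> nbhd H v)"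
  using lsg_not_adj_self[of H] lsg_adj_sym[of H]
  by (cases e; rename_tac t x; case_tac t)
     (auto simp: loc_ns_def loc_s_def iso_ns_def Aent_def nbhd_def)

lemma swapCP_swapCP [simp]: "swapCP (swapCP t) = t"
  by (cases t) auto

lemma swapFP_swapFP [simp]: "swapFP (swapFP t) = t"
  by (cases t) auto

lemma swapFC_swapFC [simp]: "swapFC (swapFC t) = t"
  by (cases t) auto

lemma inj_iso_l: "inj (iso_l v)"
  by (rule inj_on_inverseI[of _ "iso_l v"]) (auto simp: iso_l_def)

lemma inj_iso_s: "inj (iso_s H v)"
  by (rule inj_on_inverseI[of _ "iso_s H v"]) (auto simp: iso_s_def)

lemma inj_iso_ns: "inj (iso_ns H v)"
  by (rule inj_on_inverseI[of _ "iso_ns H v"]) (auto simp: iso_ns_def)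

lemma snd_iso_s [simp]: "snd (iso_s H v e) = snd e"
  by (simp add: iso_s_def)

lemma verts_loc [simp]:
  "verts (loc_l v H) = verts H" "verts (loc_s v H) = verts H" "verts (loc_ns v H) = verts H"
  by (simp_all add: loc_l_def loc_s_def loc_ns_def)

lemma loops_loc_s [simp]: "loops (loc_s v H) = loops H"
  by (simp add: loc_s_def)

lemma lsg_loc_l: "lsg H \<Longrightarrow> v \<in> verts H \<Longrightarrow> lsg (loc_l v H)"
  by (auto simp: lsg_def loc_l_def)

lemma lsg_loc_s: "lsg H \<Longrightarrow> lsg (loc_s v H)"
  by (auto simp: lsg_def loc_s_def nbhd_def)

lemma lsg_loc_ns: "lsg H \<Longrightarrow> lsg (loc_ns v H)"
  by (auto simp: lsg_def loc_ns_def loc_s_def nbhd_def)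

lemma ind_iso_lsg: "ind_iso G H \<beta> \<Longrightarrow> lsg G \<Longrightarrow> lsg H"
  by (induction rule: ind_iso.induct) (simp_all add: lsg_loc_l lsg_loc_s lsg_loc_ns)

lemma ind_iso_inj: "ind_iso G H \<beta> \<Longrightarrow> inj \<beta>"
  by (induction rule: ind_iso.induct) (simp, (rule inj_compose; simp add: inj_iso_l inj_iso_s inj_iso_ns)+)

lemma ind_iso_trans: "ind_iso B C g \<Longrightarrow> ind_iso A B f \<Longrightarrow> ind_iso A C (g \<circ> f)"
  by (induction rule: ind_iso.induct) (auto simp: comp_assoc intro: ind_iso.intros)

lemma indep_ind_iso:
  assumes "ind_iso G H \<beta>" "lsg G"
  shows "indep H (\<beta> ` T) \<longleftrightarrow> indep G T"
  using assms
proof (induction rule: ind_iso.induct)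
  case (step_l H \<beta> v)
  have "lsg H"
    using step_l ind_iso_lsg by blast
  have "indep (loc_l v H) (iso_l v ` \<beta> ` T) \<longleftrightarrow> indep H (\<beta> ` T)"
    by (intro indep_image_row_addition[where N = "{}" and v = v] inj_on_subset[OF inj_iso_l])
       (simp_all add: \<open>lsg H\<close> col_loc_l step_l.hyps)
  with step_l show ?case
    by (simp add: image_comp)
next
  case (step_s H \<beta> v)
  have "lsg H"
    using step_s ind_iso_lsg by blast
  have "indep (loc_s v H) (iso_s H v ` \<beta> ` T) \<longleftrightarrow> indep H (\<beta> ` T)"
    by (intro indep_image_row_addition[where N = "nbhd H v"] inj_on_subset[OF inj_iso_s])
       (simp_all add: \<open>lsg H\<close> col_loc_s not_in_nbhd_self step_s.hyps)
  with step_s show ?case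
    by (simp add: image_comp)
next
  case (step_ns H \<beta> v)
  have "lsg H"
    using step_ns ind_iso_lsg by blast
  have "indep (loc_ns v H) (iso_ns H v ` \<beta> ` T) \<longleftrightarrow> indep H (\<beta> ` T)"
    by (intro indep_image_row_addition[where N = "nbhd H v"] inj_on_subset[OF inj_iso_ns])
       (simp_all add: \<open>lsg H\<close> col_loc_ns not_in_nbhd_self step_ns.hyps)
  with step_ns show ?case
    by (simp add: image_comp)
qed simp

lemma rk_image:
  assumes "inj_on \<beta> S" "\<And>T. T \<subseteq> S \<Longrightarrow> indep H (\<beta> ` T) \<longleftrightarrow> indep G T"
  shows "rk H (\<beta> ` S) = rk G S"
proof -
  have "n \<in> {card T | T. T \<subseteq> \<beta> ` S \<and> indep H T} \<longleftrightarrow> n \<in> {card T | T. T \<subseteq> S \<and> indep G T}"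
    for n
  proof -
    have "n \<in> {card T | T. T \<subseteq> \<beta> ` S \<and> indep H T} \<longleftrightarrow>
        (\<exists>U\<subseteq>S. n = card (\<beta> ` U) \<and> indep H (\<beta> ` U))"
      by (auto simp: subset_image_iff)
    also have "\<dots> \<longleftrightarrow> (\<exists>U\<subseteq>S. n = card U \<and> indep G U)"
      using assms by (metis card_image inj_on_subset)
    finally show ?thesis
      by blast
  qed
  then show ?thesis
    unfolding rk_def by (intro arg_cong[where f = Max]) blast
qed

lemma rk_ind_iso:
  assumes "ind_iso G H \<beta>" "lsg G"
  shows "rk H (\<beta> ` S) = rk G S"
  using assms by (intro rk_image inj_on_subset[OF ind_iso_inj]) (simp_all add: indep_ind_iso)

lemma card_ind_iso: "ind_iso G H \<beta> \<Longrightarrow> card (\<beta> ` S) = card S"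
  by (meson card_image ind_iso_inj inj_on_subset subset_UNIV)

lemma card_le_card_support_of_indep:
  assumes ind: "indep H T" and supp: "\<And>e w. e \<in> T \<Longrightarrow> w \<in> verts H \<Longrightarrow> col H e w \<Longrightarrow> w \<in> P"
    and "finite P"
  shows "card T \<le> card P"
proof -
  have "finite T"
    using ind by (simp add: indep_def)
  define parity_set where "parity_set U = {w\<in>P. odd (card {e\<in>U. col H e w})}" for U
  \<comment> \<open>the symmetric difference of two distinct subsets has an odd row, which must lie in \<open>P\<close>\<close>
  have "inj_on parity_set (Pow T)"
  proof (rule inj_onI, rule ccontr)
    fix U1 U2
    assume U: "U1 \<in> Pow T" "U2 \<in> Pow T" "parity_set U1 = parity_set U2" "U1 \<noteq> U2"
    define D where "D = (U1 - U2) \<union> (U2 - U1)"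
    have "D \<subseteq> T" "D \<noteq> {}"
      using U by (auto simp: D_def)
    then obtain w where w: "w \<in> verts H" "odd (card {e\<in>D. col H e w})"
      using ind unfolding indep_def by blast
    have "{e\<in>T. (e \<in> U1 \<and> col H e w) \<noteq> (e \<in> U2 \<and> col H e w)} = {e\<in>D. col H e w}"
      "{e\<in>T. e \<in> U1 \<and> col H e w} = {e\<in>U1. col H e w}"
      "{e\<in>T. e \<in> U2 \<and> col H e w} = {e\<in>U2. col H e w}"
      using U by (auto simp: D_def)
    then have "odd (card {e\<in>U1. col H e w}) \<noteq> odd (card {e\<in>U2. col H e w})"
      using odd_card_xor[OF \<open>finite T\<close>, of "\<lambda>e. e \<in> U1 \<and> col H e w" "\<lambda>e. e \<in> U2 \<and> col H e w"] w(2)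
      by simp
    moreover have "w \<in> P"
      using w supp \<open>D \<subseteq> T\<close> by (metis (no_types, lifting) empty_Collect_eq card.empty even_zero subsetD)
    ultimately show False
      using U(3) unfolding parity_set_def by blast
  qed
  moreover have "parity_set ` Pow T \<subseteq> Pow P"
    by (auto simp: parity_set_def)
  ultimately have "card (Pow T) \<le> card (Pow P)"
    using \<open>finite P\<close> by (simp add: card_inj_on_le)
  then show ?thesis
    using \<open>finite T\<close> \<open>finite P\<close> by (simp add: card_Pow)
qed

definition phi_support :: "'v welem set \<Rightarrow> 'v set" where
  "phi_support T = {v. (Phi, v) \<in> T}"

lemma indep_Phi_columns:
  assumes "P \<subseteq> verts H" "finite P"
  shows "indep H (Pair Phi ` P)"
  unfolding indep_def
proof (intro conjI allI impI)
  fix U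
  assume U: "U \<subseteq> Pair Phi ` P" "U \<noteq> {}"
  then obtain u where u: "(Phi, u) \<in> U" "u \<in> P"
    by auto
  have "{e\<in>U. col H e u} = {(Phi, u)}"
    using U u by auto
  then have "odd (card {e\<in>U. col H e u})"
    by simp
  moreover have "u \<in> verts H"
    using u assms(1) by blast
  ultimately show "\<exists>w\<in>verts H. odd (card {e\<in>U. col H e w})"
    by blast
qed (use assms(2) in simp)

lemma rk_eq_card_phi_support:
  assumes "finite (verts H)" "phi_support T \<subseteq> verts H"
    and supp: "\<And>e w. e \<in> T \<Longrightarrow> w \<in> verts H \<Longrightarrow> col H e w \<Longrightarrow> w \<in> phi_support T"
  shows "rk H T = card (phi_support T)"
proof -
  let ?P = "phi_support T"
  let ?A = "{card T' | T'. T' \<subseteq> T \<and> indep H T'}"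
  have fin: "finite ?P"
    using assms(1,2) finite_subset by blast
  have "Pair Phi ` ?P \<subseteq> T" "card (Pair Phi ` ?P) = card ?P"
    by (auto simp: phi_support_def card_image inj_on_def)
  then have "card ?P \<in> ?A"
    using indep_Phi_columns[OF assms(2) fin] by (intro CollectI exI[of _ "Pair Phi ` ?P"]) simp
  moreover have bound: "n \<le> card ?P" if n: "n \<in> ?A" for n
  proof -
    obtain T' where "n = card T'" "T' \<subseteq> T" "indep H T'"
      using n by blast
    then show ?thesis
      using card_le_card_support_of_indep[OF _ _ fin] supp by (metis subsetD)
  qed
  moreover have "finite ?A"
    using bound by (meson finite_atMost finite_subset atMost_iff subsetI)
  ultimately show ?thesis
    unfolding rk_def by (intro Max_eqI)
qed

definition zeta_centre :: "'v lgraph \<Rightarrow> 'v \<Rightarrow> 'v welem" where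
  "zeta_centre H x = (if x \<in> loops H then Psi else Chi, x)"

lemma zeta_eq: "zeta H x = insert (zeta_centre H x) (Pair Phi ` nbhd H x)"
  by (auto simp: zeta_def zeta_centre_def)

lemma zeta_centre_ne_Phi [simp]: "zeta_centre H x \<noteq> (Phi, w)" "(Phi, w) \<noteq> zeta_centre H x"
  by (simp_all add: zeta_centre_def)

lemma snd_zeta_centre [simp]: "snd (zeta_centre H x) = x"
  by (simp add: zeta_centre_def)

lemma col_zeta_centre: "lsg H \<Longrightarrow> col H (zeta_centre H x) w \<longleftrightarrow> adj H x w"
  by (auto simp: zeta_centre_def Aent_def lsg_def)

definition zeta_shaped :: "'v lgraph \<Rightarrow> 'v set \<Rightarrow> 'v welem set \<Rightarrow> bool" where
  "zeta_shaped H X T \<longleftrightarrow> X \<subseteq> verts H \<and> stable H X \<and> (\<Union>x\<in>X. zeta H x) \<subseteq> T \<and>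
     T \<subseteq> {(Phi, v) | v. v \<in> verts H - X} \<union> (\<Union>x\<in>X. zeta H x)"

lemma zeta_shaped_eq_Un:
  assumes "zeta_shaped H X T"
  shows "T = Pair Phi ` phi_support T \<union> zeta_centre H ` X"
  using assms by (auto simp: zeta_shaped_def phi_support_def zeta_eq)

lemma nullity_zeta_shaped:
  assumes lsg: "lsg H" and shaped: "zeta_shaped H X T"
  shows "card T - rk H T = card X"
proof -
  let ?P = "phi_support T"
  have fin: "finite (verts H)"
    using lsg by (simp add: lsg_def)
  have X: "X \<subseteq> verts H" and zeta_sub: "\<And>x. x \<in> X \<Longrightarrow> zeta H x \<subseteq> T"
    and sub: "T \<subseteq> {(Phi, v) | v. v \<in> verts H - X} \<union> (\<Union>x\<in>X. zeta H x)"
    using shaped by (auto simp: zeta_shaped_def)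
  have "?P \<subseteq> verts H"
  proof
    fix u
    assume "u \<in> ?P"
    then have "(Phi, u) \<in> T"
      by (simp add: phi_support_def)
    then consider "u \<in> verts H" | x where "(Phi, u) \<in> zeta H x"
      using sub by blast
    then show "u \<in> verts H"
      by cases (use lsg in \<open>auto simp: zeta_eq nbhd_def lsg_def\<close>)
  qed
  moreover have "w \<in> ?P" if "e \<in> T" "col H e w" for e w
  proof -
    have "e \<in> Pair Phi ` ?P \<union> zeta_centre H ` X"
      using \<open>e \<in> T\<close> zeta_shaped_eq_Un[OF shaped] by simp
    then consider u where "e = (Phi, u)" "u \<in> ?P" | x where "x \<in> X" "e = zeta_centre H x"
      by blast
    then show ?thesis
    proof cases
      case (2 x)
      \<comment> \<open>the centre of \<open>\<zeta>(x)\<close> is supported on \<open>N(x)\<close>, whose \<open>\<phi>\<close>-elements lie in \<open>\<zeta>(x) \<subseteq> T\<close>\<close>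
      then have "(Phi, w) \<in> zeta H x"
        using that(2) col_zeta_centre[OF lsg] by (simp add: zeta_eq nbhd_def)
      then show ?thesis
        using zeta_sub[OF \<open>x \<in> X\<close>] by (auto simp: phi_support_def)
    qed (use that in auto)
  qed
  ultimately have "rk H T = card ?P"
    using fin by (intro rk_eq_card_phi_support)
  moreover have "card T = card ?P + card X"
  proof -
    have "finite ?P" "finite X"
      using \<open>?P \<subseteq> verts H\<close> X fin finite_subset by blast+
    moreover have "inj_on (Pair Phi) ?P" "inj_on (zeta_centre H) X"
      by (auto simp: inj_on_def zeta_centre_def)
    moreover have "Pair Phi ` ?P \<inter> zeta_centre H ` X = {}"
      by auto
    ultimately show ?thesis
      by (subst zeta_shaped_eq_Un[OF shaped]) (simp add: card_Un_disjoint card_image)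
  qed
  ultimately show ?thesis
    by simp
qed

definition off_zeta :: "'v lgraph \<Rightarrow> 'v welem \<Rightarrow> bool" where
  "off_zeta H e \<longleftrightarrow> fst e \<noteq> Phi \<and> e \<noteq> zeta_centre H (snd e)"

definition reduction_measure :: "'v lgraph \<Rightarrow> 'v welem set \<Rightarrow> nat" where
  "reduction_measure H T =
     2 * card (verts H - phi_support T) + (if \<exists>e\<in>T. off_zeta H e then 0 else 1)"

definition locally_zeta_shaped :: "'v lgraph \<Rightarrow> 'v welem set \<Rightarrow> bool" where
  "locally_zeta_shaped H T \<longleftrightarrow> (\<exists>H' \<gamma> X. ind_iso H H' \<gamma> \<and> zeta_shaped H' X (\<gamma> ` T))"

lemma locally_zeta_shaped_loc_s:
  assumes "v \<in> verts H" "locally_zeta_shaped (loc_s v H) (iso_s H v ` T)"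
  shows "locally_zeta_shaped H T"
proof -
  obtain H' \<gamma> X where "ind_iso (loc_s v H) H' \<gamma>" "zeta_shaped H' X (\<gamma> ` iso_s H v ` T)"
    using assms(2) unfolding locally_zeta_shaped_def by blast
  moreover have "ind_iso H (loc_s v H) (iso_s H v)"
    using ind_iso.step_s[OF ind_iso.refl assms(1)] by simp
  ultimately show ?thesis
    unfolding locally_zeta_shaped_def by (metis ind_iso_trans image_comp)
qed

lemma iso_s_image_subset_W: "T \<subseteq> W H \<Longrightarrow> iso_s H v ` T \<subseteq> W (loc_s v H)"
  by (force simp: W_def mem_Times_iff)

lemma inj_on_snd_iso_s_image: "inj_on snd T \<Longrightarrow> inj_on snd (iso_s H v ` T)"
  by (auto simp: inj_on_def)

lemma reduction_measure_loc_s_off_zeta: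
  assumes "finite (verts H)" "inj_on snd T" "e \<in> T" "off_zeta H e" "snd e \<in> verts H"
  shows "reduction_measure (loc_s (snd e) H) (iso_s H (snd e) ` T) < reduction_measure H T"
proof -
  let ?v = "snd e"
  \<comment> \<open>\<open>s\<close> at \<open>v\<close> exchanges \<open>\<phi>(v)\<close> with the off-circuit element at \<open>v\<close>, and fixes \<open>\<phi>\<close>-elements elsewhere\<close>
  have "iso_s H ?v e = (Phi, ?v)"
    using assms(4) by (cases e; rename_tac t x; case_tac t) (auto simp: off_zeta_def zeta_centre_def iso_s_def split: if_splits)
  then have "?v \<in> phi_support (iso_s H ?v ` T)"
    using assms(3) by (force simp: phi_support_def)
  moreover have "?v \<notin> phi_support T"
  proof
    assume "?v \<in> phi_support T"
    then have "e = (Phi, ?v)"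
      using assms(2,3) by (metis inj_onD mem_Collect_eq phi_support_def snd_conv)
    then show False
      using assms(4) by (metis fst_conv off_zeta_def)
  qed
  moreover have "u \<in> phi_support (iso_s H ?v ` T)" if "u \<in> phi_support T" for u
  proof -
    have "u \<noteq> ?v"
      using that \<open>?v \<notin> phi_support T\<close> by blast
    then have "iso_s H ?v (Phi, u) = (Phi, u)"
      by (simp add: iso_s_def)
    then show ?thesis
      using that by (force simp: phi_support_def)
  qed
  ultimately have "verts H - phi_support (iso_s H ?v ` T) \<subset> verts H - phi_support T"
    using assms(5) by blast
  then have "card (verts H - phi_support (iso_s H ?v ` T)) < card (verts H - phi_support T)"
    using assms(1) by (meson finite_Diff psubset_card_mono)
  then show ?thesis
    unfolding reduction_measure_def by simp
qed

lemma reduction_measure_loc_s_uncovered_neighbour: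
  assumes "lsg H" "\<forall>e\<in>T. \<not> off_zeta H e" "zeta_centre H x \<in> T" "adj H x w" "(Phi, w) \<notin> T"
  shows "reduction_measure (loc_s w H) (iso_s H w ` T) < reduction_measure H T"
proof -
  have fin: "finite (verts H)"
    using assms(1) by (simp add: lsg_def)
  have "u \<in> phi_support (iso_s H w ` T)" if "u \<in> phi_support T" for u
  proof -
    have "iso_s H w (Phi, u) = (Phi, u)"
      using that assms(5) by (auto simp: iso_s_def phi_support_def)
    then show ?thesis
      using that by (force simp: phi_support_def)
  qed
  then have "card (verts H - phi_support (iso_s H w ` T)) \<le> card (verts H - phi_support T)"
    using fin by (intro card_mono) auto
  \<comment> \<open>\<open>s\<close> at \<open>w\<close> swaps \<open>\<chi>(x)\<close> and \<open>\<psi>(x)\<close> for the neighbour \<open>x\<close> but keeps its loop\<close>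
  moreover have "off_zeta (loc_s w H) (iso_s H w (zeta_centre H x))"
    using assms(1,4) lsg_adj_sym[OF assms(1)] lsg_not_adj_self[OF assms(1)]
    by (auto simp: off_zeta_def iso_s_def zeta_centre_def nbhd_def)
  ultimately show ?thesis
    using assms(2,3) unfolding reduction_measure_def by fastforce
qed

lemma zeta_shaped_if_saturated:
  assumes "lsg H" "T \<subseteq> W H" "inj_on snd T" "\<forall>e\<in>T. \<not> off_zeta H e"
    and closed: "\<And>x w. zeta_centre H x \<in> T \<Longrightarrow> adj H x w \<Longrightarrow> (Phi, w) \<in> T"
  shows "zeta_shaped H {x. zeta_centre H x \<in> T} T"
proof -
  let ?X = "{x. zeta_centre H x \<in> T}"
  have not_both: "(Phi, x) \<notin> T" if "x \<in> ?X" for x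
    using that assms(3) by (metis (mono_tags) inj_on_contraD mem_Collect_eq snd_conv snd_zeta_centre zeta_centre_ne_Phi)
  have "?X \<subseteq> verts H"
  proof
    fix x
    assume "x \<in> ?X"
    then have "zeta_centre H x \<in> W H"
      using assms(2) by blast
    then show "x \<in> verts H"
      by (simp add: W_def zeta_centre_def)
  qed
  moreover have "stable H ?X"
    using closed not_both by (auto simp: stable_def)
  moreover have "(\<Union>x\<in>?X. zeta H x) \<subseteq> T"
    using closed by (auto simp: zeta_eq nbhd_def)
  moreover have "T \<subseteq> {(Phi, v) | v. v \<in> verts H - ?X} \<union> (\<Union>x\<in>?X. zeta H x)"
  proof
    fix e
    assume "e \<in> T"
    show "e \<in> {(Phi, v) | v. v \<in> verts H - ?X} \<union> (\<Union>x\<in>?X. zeta H x)"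
    proof (cases "fst e = Phi")
      case True
      then show ?thesis
        using \<open>e \<in> T\<close> assms(2) not_both by (cases e) (auto simp: W_def)
    next
      case False
      then have "e = zeta_centre H (snd e)"
        using \<open>e \<in> T\<close> assms(4) by (auto simp: off_zeta_def)
      then have "snd e \<in> ?X" "e \<in> zeta H (snd e)"
        using \<open>e \<in> T\<close> by (metis mem_Collect_eq, metis insertI1 zeta_eq)
      then show ?thesis
        by blast
    qed
  qed
  ultimately show ?thesis
    by (simp add: zeta_shaped_def)
qed

theorem locally_zeta_shaped:
  "lsg H \<Longrightarrow> T \<subseteq> W H \<Longrightarrow> inj_on snd T \<Longrightarrow> locally_zeta_shaped H T"
proof (induction "reduction_measure H T" arbitrary: H T rule: less_induct)
  case less
  have reduce: "locally_zeta_shaped H T"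
    if "v \<in> verts H" "reduction_measure (loc_s v H) (iso_s H v ` T) < reduction_measure H T" for v
  proof (rule locally_zeta_shaped_loc_s[OF that(1)])
    show "locally_zeta_shaped (loc_s v H) (iso_s H v ` T)"
      by (rule less.hyps[OF that(2) lsg_loc_s[OF less.prems(1)]
            iso_s_image_subset_W[OF less.prems(2)] inj_on_snd_iso_s_image[OF less.prems(3)]])
  qed
  show ?case
  proof (cases "\<exists>e\<in>T. off_zeta H e")
    case True
    then obtain e where e: "e \<in> T" "off_zeta H e"
      by blast
    have v: "snd e \<in> verts H"
      using e(1) less.prems(2) by (auto simp: W_def mem_Times_iff)
    have "finite (verts H)"
      using less.prems(1) by (simp add: lsg_def)
    then show ?thesis
      by (rule reduce[OF v reduction_measure_loc_s_off_zeta[OF _ less.prems(3) e v]])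
  next
    case no_off: False
    show ?thesis
    proof (cases "\<exists>x w. zeta_centre H x \<in> T \<and> adj H x w \<and> (Phi, w) \<notin> T")
      case True
      then obtain x w where xw: "zeta_centre H x \<in> T" "adj H x w" "(Phi, w) \<notin> T"
        by blast
      have w: "w \<in> verts H"
        using xw(2) less.prems(1) by (simp add: lsg_def)
      have "\<forall>e\<in>T. \<not> off_zeta H e"
        using no_off by blast
      then show ?thesis
        by (rule reduce[OF w reduction_measure_loc_s_uncovered_neighbour[OF less.prems(1) _ xw]])
    next
      case False
      then have "zeta_shaped H {x. zeta_centre H x \<in> T} T"
        using no_off by (intro zeta_shaped_if_saturated less.prems) auto
      then show ?thesis
        unfolding locally_zeta_shaped_def by (intro exI[of _ H] exI[of _ id] exI[of _ "{x. zeta_centre H x \<in> T}"]) (simp add: ind_iso.refl)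
    qed
  qed
qed

lemma in_vtriple_snd: "e \<in> vtriple (snd e)"
  by (cases e; rename_tac t v; case_tac t) (simp_all add: vtriple_def)

lemma inj_on_snd_subtransversal:
  assumes "subtransversal G S"
  shows "inj_on snd S"
proof (rule inj_onI)
  fix e e'
  assume e: "e \<in> S" "e' \<in> S" "snd e = snd e'"
  let ?v = "snd e"
  have "?v \<in> verts G"
    using assms e(1) by (auto simp: subtransversal_def W_def mem_Times_iff)
  then have "card (S \<inter> vtriple ?v) \<le> 1"
    using assms by (simp add: subtransversal_def)
  moreover have "e \<in> S \<inter> vtriple ?v" "e' \<in> S \<inter> vtriple ?v"
    using e in_vtriple_snd[of e] in_vtriple_snd[of e'] by simp_all
  moreover have "finite (S \<inter> vtriple ?v)"
    by (simp add: vtriple_def)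
  ultimately show "e = e'"
    using card_le_Suc0_iff_eq by (metis One_nat_def)
qed

theorem corollary4p4:
  fixes G :: "'v lgraph" and S :: "'v welem set" and \<nu> :: nat
  assumes "lsg G" and "subtransversal G S"
  shows "\<nu> = card S - rk G S \<longleftrightarrow>
    (\<exists>H X \<beta>. lsg H \<and> locally_equivalent G H \<and> ind_iso G H \<beta> \<and>
       X \<subseteq> verts H \<and> stable H X \<and> card X = \<nu> \<and>
       (\<Union>x\<in>X. zeta H x) \<subseteq> \<beta> ` S \<and>
       \<beta> ` S \<subseteq> {(Phi, v) | v. v \<in> verts H - X} \<union> (\<Union>x\<in>X. zeta H x))"
proof -
  have "S \<subseteq> W G"
    using assms(2) by (simp add: subtransversal_def)
  have nullity: "card X = card S - rk G S" if "ind_iso G H \<beta>" "zeta_shaped H X (\<beta> ` S)" for H X \<beta>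
    using nullity_zeta_shaped[OF ind_iso_lsg[OF that(1) assms(1)] that(2)]
      rk_ind_iso[OF that(1) assms(1)] card_ind_iso[OF that(1)] by simp
  obtain H \<beta> X where shaped: "ind_iso G H \<beta>" "zeta_shaped H X (\<beta> ` S)"
    using locally_zeta_shaped[OF assms(1) \<open>S \<subseteq> W G\<close> inj_on_snd_subtransversal[OF assms(2)]]
    unfolding locally_zeta_shaped_def by blast
  show ?thesis (is "_ \<longleftrightarrow> ?rhs")
  proof -
    have "\<nu> = card S - rk G S \<longleftrightarrow> (\<exists>H X \<beta>. ind_iso G H \<beta> \<and> zeta_shaped H X (\<beta> ` S) \<and> card X = \<nu>)"
      using nullity shaped by metis
    also have "\<dots> \<longleftrightarrow> ?rhs"
      unfolding zeta_shaped_def locally_equivalent_def using ind_iso_lsg[OF _ assms(1)]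
      by (intro ex_cong1) auto
    finally show ?thesis .
  qed
qed

end
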